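(* $\Lambda\cap(l-\psi)\Lambda_\wedge=(l-\psi)\Lambda$.
   Context: Let $l$ be an odd prime, $\Lambda=\mathbb{Z}_l[[T]]$, and $\Lambda_\wedge=\{\sum_{k\in\mathbb{Z}}x_kT^k: x_k\in\mathbb{Z}_l,\ x_k\to0 \text{ as } k\to-\infty\}$ (the $l$-adic completion of the localization of $\Lambda$ at the prime ideal $l\Lambda$), containing $\Lambda$. Let $\psi:\Lambda_\wedge\to\Lambda_\wedge$ be the continuous $\mathbb{Z}_l$-algebra endomorphism with $\psi(T)=(1+T)^l-1$ (so $\psi(T^{-1})=((1+T)^l-1)^{-1}$). $(l-\psi)x=lx-\psi(x)$. *)

theory Defs
  imports "HOL-Computational_Algebra.Computational_Algebra" "HOL-Number_Theory.Cong"
begin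

text \<open>
  Encoding of Lambda_wedge (l-adic completion of Z_l[[T]] localized at (l)):
  an element x = sum_k x_k T^k (x_k in Z_l, x_k -> 0 as k -> -infinity) is
  represented by the compatible family of its reductions modulo l^n,
  X n = sum_k (x_k mod l^n) T^k, an integer Laurent series (finitely many
  negative terms, exactly because x_k -> 0) with coefficients in [0, l^n).
  Lambda_wedge = inverse limit of (Z/l^n Z)((T)).
\<close>

definition fls_cong :: "int \<Rightarrow> int fls \<Rightarrow> int fls \<Rightarrow> bool" where
  "fls_cong m f g \<longleftrightarrow> (\<forall>k. [fls_nth f k = fls_nth g k] (mod m))"

definition LamW :: "nat \<Rightarrow> (nat \<Rightarrow> int fls) set" where
  "LamW l = {X. (\<forall>n k. 0 \<le> fls_nth (X n) k \<and> fls_nth (X n) k < int l ^ n) \<and>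
                (\<forall>n k. [fls_nth (X (Suc n)) k = fls_nth (X n) k] (mod int l ^ n))}"

definition Lam :: "nat \<Rightarrow> (nat \<Rightarrow> int fls) set" where
  "Lam l = {X \<in> LamW l. \<forall>n k. k < 0 \<longrightarrow> fls_nth (X n) k = 0}"

definition psiT :: "nat \<Rightarrow> int fps" where
  "psiT l = (1 + fps_X) ^ l - 1"

text \<open>psi(T) = T^l (1 + w) with w = T^(-l) ((1+T)^l - 1 - T^l), all of whose
  coefficients are divisible by l.\<close>
definition psiW :: "nat \<Rightarrow> int fls" where
  "psiW l = fls_X_intpow (- int l) * fps_to_fls (psiT l - fps_X ^ l)"

text \<open>An inverse of psi(T) modulo l^n.\<close>
definition psiTinv :: "nat \<Rightarrow> nat \<Rightarrow> int fls" where
  "psiTinv l n = fls_X_intpow (- int l) * (\<Sum>j<n. (- psiW l) ^ j)"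

text \<open>psi modulo l^n: the ring endomorphism of (Z/l^n)((T)) with T |-> psi(T),
  computed on integer representatives.\<close>
definition psin :: "nat \<Rightarrow> nat \<Rightarrow> int fls \<Rightarrow> int fls" where
  "psin l n f = fps_to_fls (fps_compose (fls_regpart f) (psiT l))
      + (\<Sum>k\<in>{1..nat (- fls_subdegree f)}. fls_const (fls_nth f (- int k)) * psiTinv l n ^ k)"

definition lpsi_image :: "nat \<Rightarrow> (nat \<Rightarrow> int fls) set \<Rightarrow> (nat \<Rightarrow> int fls) set" where
  "lpsi_image l S = {Y \<in> LamW l. \<exists>X\<in>S. \<forall>n.
      fls_cong (int l ^ n) (Y n) (fls_const (int l) * X n - psin l n (X n))}"

end

theory Submission
  imports Defs
begin

(*
  Write \<Lambda>\<^sub>\<wedge> = \<Lambda> \<oplus> N, where N consists of the series with only negative powers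
  of T.  The map \<psi> respects this splitting: on \<Lambda> it is substitution of
  \<psi>(T) = (1+T)^l - 1, and \<psi>(T\<^sup>-\<^sup>1) = T\<^sup>-\<^sup>l (1 + w)\<^sup>-\<^sup>1 with w = T\<^sup>-\<^sup>l((1+T)^l - 1 - T^l)
  involving only negative powers of T, so \<psi>(N) \<subseteq> N.  Hence l - \<psi> respects the
  splitting as well, and if (l - \<psi>) x \<in> \<Lambda> then (l - \<psi>) x = (l - \<psi>) x\<^sup>+, where x\<^sup>+ is
  the \<Lambda>-component of x.
*)

unbundle fps_syntax

definition supported_le :: "int \<Rightarrow> 'a::comm_ring_1 fls \<Rightarrow> bool" where
  "supported_le c f \<longleftrightarrow> (\<forall>k>c. f $$ k = 0)"

lemma supported_le_mono: "a \<le> b \<Longrightarrow> supported_le a f \<Longrightarrow> supported_le b f"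
  unfolding supported_le_def by force

lemma supported_le_mult:
  assumes "supported_le a f" "supported_le b g"
  shows "supported_le (a + b) (f * g)"
  unfolding supported_le_def
proof (intro allI impI)
  fix n assume n: "n > a + b"
  have "f $$ i * g $$ (n - i) = 0" for i
  proof (cases "i > a")
    case True then show ?thesis using assms(1) by (simp add: supported_le_def)
  next
    case False then have "n - i > b" using n by simp
    then show ?thesis using assms(2) by (simp add: supported_le_def)
  qed
  then show "(f * g) $$ n = 0" by (simp add: fls_times_nth(2))
qed

lemma supported_le_power: "supported_le a f \<Longrightarrow> supported_le (int j * a) (f ^ j)"
proof (induction j)
  case 0 then show ?case by (simp add: supported_le_def)
next
  case (Suc j)
  have "supported_le (a + int j * a) (f * f ^ j)"
    using supported_le_mult[OF Suc.prems Suc.IH[OF Suc.prems]] .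
  then show ?case by (simp add: algebra_simps)
qed

lemma supported_le_sum:
  "(\<And>x. x \<in> A \<Longrightarrow> supported_le c (f x)) \<Longrightarrow> supported_le c (\<Sum>x\<in>A. f x)"
  by (simp add: supported_le_def fls_nth_sum)

lemma supported_le_uminus: "supported_le c f \<Longrightarrow> supported_le c (- f)"
  by (simp add: supported_le_def)

lemma supported_le_const_mult: "supported_le c f \<Longrightarrow> supported_le c (fls_const x * f)"
  by (simp add: supported_le_def)

lemma fps_one_plus_X_power_nth:
  "((1 + fps_X) ^ m :: 'a::comm_ring_1 fps) $ i = of_nat (m choose i)"
proof (induction m arbitrary: i)
  case 0 then show ?case by (cases i) simp_all
next
  case (Suc m)
  have "((1 + fps_X) ^ Suc m :: 'a fps) = (1 + fps_X) ^ m + fps_X * (1 + fps_X) ^ m"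
    by (simp add: algebra_simps)
  then have "((1 + fps_X) ^ Suc m :: 'a fps) $ i
               = ((1 + fps_X) ^ m) $ i + (fps_X * (1 + fps_X) ^ m) $ i"
    by (simp only: fps_add_nth)
  then show ?case using Suc.IH
    by (cases i) (simp_all only: fps_X_mult_nth, simp_all)
qed

text \<open>\<open>w = T\<^sup>-\<^sup>l((1+T)^l - 1 - T^l)\<close> only involves negative powers of \<open>T\<close>,
  since \<open>(1+T)^l - T^l\<close> has degree below \<open>l\<close>.\<close>
lemma psiW_supported:
  assumes "l > 0"
  shows "supported_le (-1) (psiW l)"
  unfolding supported_le_def psiW_def fls_X_intpow_times_conv_shift
proof (intro allI impI)
  fix k :: int assume k: "k > -1"
  then have "nat (k + int l) \<ge> l" by simp
  then show "fls_shift (- (- int l)) (fps_to_fls (psiT l - fps_X ^ l)) $$ k = 0"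
    using k assms
    by (auto simp: psiT_def fps_one_plus_X_power_nth fps_X_power_iff binomial_eq_0)
qed

lemma psiTinv_supported:
  assumes "l > 0"
  shows "supported_le (- int l) (psiTinv l n)"
proof -
  have "supported_le 0 (\<Sum>j<n. (- psiW l) ^ j)"
  proof (rule supported_le_sum)
    fix j
    have "supported_le (int j * (-1)) ((- psiW l) ^ j)"
      using supported_le_power[OF supported_le_uminus[OF psiW_supported[OF assms]]] .
    then show "supported_le 0 ((- psiW l) ^ j)"
      by (rule supported_le_mono[rotated]) simp
  qed
  then show ?thesis
    unfolding psiTinv_def fls_X_intpow_times_conv_shift by (simp add: supported_le_def)
qed

lemma psin_principal_part_supported:
  assumes "l > 0"
  shows "supported_le (-1) (\<Sum>k\<in>{1..N}. fls_const (c k) * psiTinv l n ^ k)"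
proof (rule supported_le_sum)
  fix k assume "k \<in> {1..N::nat}"
  with assms have "0 < k * l" by simp
  then have "1 \<le> int (k * l)" by linarith
  then have "int k * (- int l) \<le> -1" by simp
  then show "supported_le (-1) (fls_const (c k) * psiTinv l n ^ k)"
    by (intro supported_le_const_mult
          supported_le_mono[OF _ supported_le_power[OF psiTinv_supported[OF assms]]])
qed

lemma psin_nth_nonneg:
  assumes "l > 0" "k \<ge> 0"
  shows "psin l n f $$ k = fps_to_fls (fps_compose (fls_regpart f) (psiT l)) $$ k"
  using psin_principal_part_supported[OF assms(1),
      where N = "nat (- fls_subdegree f)" and c = "\<lambda>k. f $$ (- int k)" and n = n] assms(2)
  unfolding psin_def by (simp add: supported_le_def)

lemma psin_power_series:
  assumes "\<And>k. k < 0 \<Longrightarrow> f $$ k = 0"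
  shows "psin l n f = fps_to_fls (fps_compose (fls_regpart f) (psiT l))"
proof -
  have "0 \<le> fls_subdegree f" using assms by (rule fls_subdegree_ge0I)
  then show ?thesis unfolding psin_def by simp
qed

lemma lpsi_regular_part:
  fixes f :: "int fls"
  assumes "l > 0"
  shows "(fls_const (int l) * fls_regpart_as_fls f - psin l n (fls_regpart_as_fls f)) $$ k
           = (if k < 0 then 0 else (fls_const (int l) * f - psin l n f) $$ k)"
proof -
  have psi_reg: "psin l n (fls_regpart_as_fls f) = fps_to_fls (fls_regpart f oo psiT l)"
    by (subst psin_power_series) simp_all
  show ?thesis
    using psin_nth_nonneg[OF assms, of k n f] by (simp add: psi_reg)
qed

definition regular_part :: "(nat \<Rightarrow> int fls) \<Rightarrow> nat \<Rightarrow> int fls" where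
  "regular_part X n = fls_regpart_as_fls (X n)"

lemma regular_part_nth: "regular_part X n $$ k = (if k < 0 then 0 else X n $$ k)"
  by (simp add: regular_part_def)

lemma regular_part_in_Lam:
  assumes "l > 0" "X \<in> LamW l"
  shows "regular_part X \<in> Lam l"
  using assms unfolding Lam_def LamW_def by (simp add: regular_part_nth)

lemma Lam_subset_LamW: "Lam l \<subseteq> LamW l"
  unfolding Lam_def by blast

lemma canonical_residue_cong_zero:
  fixes c m :: int
  assumes "0 \<le> c" "c < m" "[c = 0] (mod m)"
  shows "c = 0"
proof (rule ccontr)
  assume "c \<noteq> 0"
  with assms(1) have "0 < c" by simp
  moreover have "m dvd c" using assms(3) by (simp add: cong_0_iff)
  ultimately show False using zdvd_imp_le assms(2) by fastforce
qed

lemma lpsi_image_Lam_subset_Lam: "lpsi_image l (Lam l) \<subseteq> Lam l"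
proof
  fix Y assume "Y \<in> lpsi_image l (Lam l)"
  then obtain X where X: "X \<in> Lam l" and Y: "Y \<in> LamW l"
    and XY: "\<And>n. fls_cong (int l ^ n) (Y n) (fls_const (int l) * X n - psin l n (X n))"
    unfolding lpsi_image_def by blast
  have "Y n $$ k = 0" if k: "k < 0" for n k
  proof (rule canonical_residue_cong_zero)
    show "0 \<le> Y n $$ k" "Y n $$ k < int l ^ n" using Y unfolding LamW_def by auto
    have Xneg: "\<And>k. k < 0 \<Longrightarrow> X n $$ k = 0" using X unfolding Lam_def by auto
    show "[Y n $$ k = 0] (mod int l ^ n)"
      using XY[of n, unfolded fls_cong_def, rule_format, of k] k
      by (simp add: psin_power_series[OF Xneg] Xneg)
  qed
  with Y show "Y \<in> Lam l" unfolding Lam_def by blast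
qed

lemma Lam_inter_lpsi_image_subset:
  assumes "l > 0"
  shows "Lam l \<inter> lpsi_image l (LamW l) \<subseteq> lpsi_image l (Lam l)"
proof
  fix Y assume "Y \<in> Lam l \<inter> lpsi_image l (LamW l)"
  then obtain X where X: "X \<in> LamW l" and Y: "Y \<in> Lam l"
    and XY: "\<And>n. fls_cong (int l ^ n) (Y n) (fls_const (int l) * X n - psin l n (X n))"
    unfolding lpsi_image_def by blast
  have "fls_cong (int l ^ n) (Y n)
          (fls_const (int l) * regular_part X n - psin l n (regular_part X n))" for n
    unfolding fls_cong_def
  proof
    fix k
    have coeff: "(fls_const (int l) * regular_part X n - psin l n (regular_part X n)) $$ k
                   = (if k < 0 then 0 else (fls_const (int l) * X n - psin l n (X n)) $$ k)"
      unfolding regular_part_def by (rule lpsi_regular_part[OF assms])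
    show "[Y n $$ k = (fls_const (int l) * regular_part X n
                        - psin l n (regular_part X n)) $$ k] (mod int l ^ n)"
    proof (cases "k < 0")
      case True
      then have "Y n $$ k = 0" using Y unfolding Lam_def by blast
      with True show ?thesis by (simp only: coeff if_True cong_refl)
    next
      case False
      with XY[of n] show ?thesis unfolding fls_cong_def coeff by simp
    qed
  qed
  with Y regular_part_in_Lam[OF assms X] show "Y \<in> lpsi_image l (Lam l)"
    unfolding lpsi_image_def Lam_def by blast
qed

theorem mainTheorem5:
  fixes l :: nat
  assumes "prime l" and "odd l"
  shows "Lam l \<inter> lpsi_image l (LamW l) = lpsi_image l (Lam l)"
proof
  have "l > 0" using assms(1) prime_gt_0_nat by blast
  then show "Lam l \<inter> lpsi_image l (LamW l) \<subseteq> lpsi_image l (Lam l)"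
    by (rule Lam_inter_lpsi_image_subset)
  have "lpsi_image l (Lam l) \<subseteq> lpsi_image l (LamW l)"
    using Lam_subset_LamW unfolding lpsi_image_def by blast
  then show "lpsi_image l (Lam l) \<subseteq> Lam l \<inter> lpsi_image l (LamW l)"
    using lpsi_image_Lam_subset_Lam by blast
qed

end
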